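(* Let $(X,\tau)$ be a topological space which is not statistically compact, let $\infty^X$ be a point not in $X$, $X^s=X\cup\{\infty^X\}$, and $\tau^X_s=\tau\cup\{X^s\setminus C: C \text{ is a closed and statistically compact subset of } X\}$. Then $\tau^X_s$ is a topology on $X^s$ and $(X^s,\tau^X_s)$ is statistically compact.
   Context: For $A\subseteq\mathbb{N}$ let $d_n(A)=|A\cap\{1,\dots,n\}|/n$, $\overline{d}(A)=\limsup_n d_n(A)$, $\underline{d}(A)=\liminf_n d_n(A)$, and $d(A)$ their common value when equal. A sequence in $X$ is a map from an infinite subset $M\subseteq\mathbb{N}$ into $X$, written $(x_n)_{n\in M}$; a subsequence is $(x_n)_{n\in N}$ with $N\subseteq M$ infinite. It is nonthin if $\overline{d}(M)>0$. A nonthin sequence $(x_n)_{n\in M}$ is statistically convergent to $a\in X$ if for every open $U\ni a$, $d(\{n\in M:x_n\notin U\})=0$. A topological space is statistically compact if every nonthin sequence in it has a nonthin subsequence that is statistically convergent to some point of the space; a subset is statistically compact if it is so in the subspace topology. $(X^s,\tau^X_s)$ is called the one point statistical compactification of $X$. *)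

theory Defs
  imports "HOL-Analysis.Analysis"
begin

definition dens_n :: "nat set \<Rightarrow> nat \<Rightarrow> real" where
  "dens_n A n = real (card (A \<inter> {1..n})) / real n"

definition upper_density :: "nat set \<Rightarrow> ereal" where
  "upper_density A = limsup (\<lambda>n. ereal (dens_n A n))"

definition lower_density :: "nat set \<Rightarrow> ereal" where
  "lower_density A = liminf (\<lambda>n. ereal (dens_n A n))"

definition has_density :: "nat set \<Rightarrow> real \<Rightarrow> bool" where
  "has_density A c \<longleftrightarrow> upper_density A = ereal c \<and> lower_density A = ereal c"

definition nonthin :: "nat set \<Rightarrow> bool" where
  "nonthin M \<longleftrightarrow> upper_density M > 0"

definition is_seq :: "'a topology \<Rightarrow> nat set \<Rightarrow> (nat \<Rightarrow> 'a) \<Rightarrow> bool" where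
  "is_seq X M x \<longleftrightarrow> infinite M \<and> (\<forall>n\<in>M. x n \<in> topspace X)"

definition stat_conv :: "'a topology \<Rightarrow> nat set \<Rightarrow> (nat \<Rightarrow> 'a) \<Rightarrow> 'a \<Rightarrow> bool" where
  "stat_conv X M x a \<longleftrightarrow> is_seq X M x \<and> nonthin M \<and> a \<in> topspace X \<and>
     (\<forall>U. openin X U \<and> a \<in> U \<longrightarrow> has_density {n\<in>M. x n \<notin> U} 0)"

definition stat_compact :: "'a topology \<Rightarrow> bool" where
  "stat_compact X \<longleftrightarrow>
     (\<forall>M x. is_seq X M x \<and> nonthin M \<longrightarrow>
        (\<exists>N a. N \<subseteq> M \<and> infinite N \<and> nonthin N \<and> a \<in> topspace X \<and> stat_conv X N x a))"

text \<open>One point statistical compactification; the new point is None, X is embedded via Some.\<close>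
definition stat_carrier :: "'a topology \<Rightarrow> 'a option set" where
  "stat_carrier X = Some ` topspace X \<union> {None}"

definition stat_opens :: "'a topology \<Rightarrow> 'a option set set" where
  "stat_opens X = {Some ` U | U. openin X U} \<union>
     {stat_carrier X - Some ` C | C. closedin X C \<and> stat_compact (subtopology X C)}"

end

theory Submission
  imports Defs
begin

text \<open>
  A set U of the compactification is open iff its trace on X is open and, when it contains the
  new point, the complement of that trace is closed and statistically compact. Closed statistically
  compact sets are stable under finite unions (a nonthin sequence has a nonthin part in one of the
  pieces) and under passing to closed subsets (statistical limits stay in closed sets), which gives
  the topology axioms. For compactness, take a nonthin sequence: if a nonthin part of it lies in
  some closed statistically compact C, a nonthin subsequence converges in C, hence in the
  compactification since the embedding is continuous; otherwise every neighbourhood of the new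
  point contains the sequence outside a thin set of indices, so the sequence itself converges
  statistically to the new point.
\<close>

lemma dens_n_nonneg: "0 \<le> dens_n A n"
  by (simp add: dens_n_def)

lemma dens_n_mono: "A \<subseteq> B \<Longrightarrow> dens_n A n \<le> dens_n B n"
  unfolding dens_n_def by (intro divide_right_mono) (auto intro: card_mono)

lemma dens_n_Un_le: "dens_n (A \<union> B) n \<le> dens_n A n + dens_n B n"
proof -
  have "card ((A \<union> B) \<inter> {1..n}) \<le> card (A \<inter> {1..n}) + card (B \<inter> {1..n})"
    by (simp add: Int_Un_distrib2 card_Un_le)
  then show ?thesis
    unfolding dens_n_def add_divide_distrib[symmetric] by (intro divide_right_mono) simp_all
qed

lemma dens_n_le_card: "finite A \<Longrightarrow> dens_n A n \<le> real (card A) / real n"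
  unfolding dens_n_def by (intro divide_right_mono) (auto intro: card_mono)

lemma has_density_0_iff_not_nonthin: "has_density A 0 \<longleftrightarrow> \<not> nonthin A"
proof -
  have "0 \<le> lower_density A"
    unfolding lower_density_def by (intro Liminf_bounded always_eventually) (simp add: dens_n_nonneg)
  moreover have "lower_density A \<le> upper_density A"
    unfolding lower_density_def upper_density_def by (simp add: Liminf_le_Limsup)
  ultimately show ?thesis
    by (auto simp: has_density_def nonthin_def not_less zero_ereal_def[symmetric])
qed

lemma not_nonthin_iff_tendsto_0: "\<not> nonthin A \<longleftrightarrow> dens_n A \<longlonglongrightarrow> 0"
proof -
  have "dens_n A \<longlonglongrightarrow> 0 \<longleftrightarrow> (\<lambda>n. ereal (dens_n A n)) \<longlonglongrightarrow> ereal 0"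
    by (simp only: lim_ereal)
  also have "\<dots> \<longleftrightarrow> has_density A 0"
    unfolding has_density_def upper_density_def lower_density_def
    using tendsto_iff_Liminf_eq_Limsup[OF trivial_limit_sequentially] by blast
  finally show ?thesis
    by (simp add: has_density_0_iff_not_nonthin)
qed

lemma not_nonthin_tendsto_0_bound:
  assumes "\<And>n. dens_n A n \<le> f n" "f \<longlonglongrightarrow> 0"
  shows "\<not> nonthin A"
  unfolding not_nonthin_iff_tendsto_0
  by (rule tendsto_sandwich[of "\<lambda>_. 0" _ _ f]) (use assms dens_n_nonneg in auto)

lemma not_nonthin_subset: "A \<subseteq> B \<Longrightarrow> \<not> nonthin B \<Longrightarrow> \<not> nonthin A"
  by (rule not_nonthin_tendsto_0_bound[of _ "dens_n B"])
    (simp_all add: dens_n_mono not_nonthin_iff_tendsto_0)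

lemma not_nonthin_Un: "\<not> nonthin A \<Longrightarrow> \<not> nonthin B \<Longrightarrow> \<not> nonthin (A \<union> B)"
  by (rule not_nonthin_tendsto_0_bound[of _ "\<lambda>n. dens_n A n + dens_n B n"])
    (auto simp: dens_n_Un_le not_nonthin_iff_tendsto_0 intro: tendsto_add_zero)

lemma nonthin_infinite: "nonthin A \<Longrightarrow> infinite A"
proof
  assume "finite A"
  have "(\<lambda>n. real (card A) * inverse (real n)) \<longlonglongrightarrow> 0"
    using tendsto_mult_right_zero[OF lim_inverse_n] .
  then have "\<not> nonthin A"
    by (intro not_nonthin_tendsto_0_bound) (use \<open>finite A\<close> dens_n_le_card in \<open>auto simp: divide_inverse\<close>)
  then show "nonthin A \<Longrightarrow> False" by simp
qed

lemma stat_conv_subtopology_iff: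
  "stat_conv (subtopology X S) N x a \<longleftrightarrow> stat_conv X N x a \<and> a \<in> S \<and> (\<forall>n\<in>N. x n \<in> S)"
proof (cases "a \<in> S \<and> (\<forall>n\<in>N. x n \<in> S)")
  case True
  then have same: "{n\<in>N. x n \<notin> T \<inter> S} = {n\<in>N. x n \<notin> T}" for T
    by auto
  have "(\<forall>U. openin (subtopology X S) U \<and> a \<in> U \<longrightarrow> has_density {n\<in>N. x n \<notin> U} 0)
      \<longleftrightarrow> (\<forall>T. openin X T \<and> a \<in> T \<longrightarrow> has_density {n\<in>N. x n \<notin> T} 0)"
  proof (intro iffI allI impI)
    fix T
    assume "\<forall>U. openin (subtopology X S) U \<and> a \<in> U \<longrightarrow> has_density {n\<in>N. x n \<notin> U} 0"
      and "openin X T \<and> a \<in> T"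
    moreover have "openin (subtopology X S) (T \<inter> S) \<and> a \<in> T \<inter> S"
      using \<open>openin X T \<and> a \<in> T\<close> True by (simp add: openin_subtopology_Int)
    ultimately have "has_density {n\<in>N. x n \<notin> T \<inter> S} 0"
      by (elim allE[of _ "T \<inter> S"]) (rule mp)
    then show "has_density {n\<in>N. x n \<notin> T} 0"
      by (simp only: same)
  next
    fix U
    assume lim: "\<forall>T. openin X T \<and> a \<in> T \<longrightarrow> has_density {n\<in>N. x n \<notin> T} 0"
      and "openin (subtopology X S) U \<and> a \<in> U"
    then obtain T where "openin X T" "a \<in> T" "U = T \<inter> S"
      by (auto simp: openin_subtopology)
    then show "has_density {n\<in>N. x n \<notin> U} 0"
      using lim by (simp only: same)
  qed
  then show ?thesis
    using True by (simp add: stat_conv_def is_seq_def)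
qed (auto simp: stat_conv_def is_seq_def)

lemma stat_conv_closedin:
  assumes "closedin X C" "stat_conv X N x a" "\<forall>n\<in>N. x n \<in> C"
  shows "a \<in> C"
proof (rule ccontr)
  assume "a \<notin> C"
  then have "has_density {n\<in>N. x n \<notin> topspace X - C} 0"
    using assms(1,2) by (auto simp: stat_conv_def closedin_def)
  moreover have "{n\<in>N. x n \<notin> topspace X - C} = N"
    using assms(3) by auto
  ultimately show False
    using assms(2) by (simp add: has_density_0_iff_not_nonthin stat_conv_def)
qed

lemma stat_conv_continuous_map:
  assumes f: "continuous_map X Y f" and conv: "stat_conv X N y a" and z: "\<forall>n\<in>N. z n = f (y n)"
  shows "stat_conv Y N z (f a)"
  unfolding stat_conv_def
proof (intro conjI allI impI)
  show "is_seq Y N z" "nonthin N" "f a \<in> topspace Y"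
    using conv f z by (auto simp: stat_conv_def is_seq_def continuous_map_def)
  fix U
  assume U: "openin Y U \<and> f a \<in> U"
  then have "has_density {n\<in>N. y n \<notin> {p \<in> topspace X. f p \<in> U}} 0"
    using conv f by (auto simp: stat_conv_def continuous_map_def)
  moreover have "{n\<in>N. y n \<notin> {p \<in> topspace X. f p \<in> U}} = {n\<in>N. z n \<notin> U}"
    using conv z by (auto simp: stat_conv_def is_seq_def)
  ultimately show "has_density {n\<in>N. z n \<notin> U} 0"
    by simp
qed

lemma stat_compact_subtopology_iff:
  "stat_compact (subtopology X S) \<longleftrightarrow>
     (\<forall>M x. nonthin M \<and> (\<forall>n\<in>M. x n \<in> topspace X \<inter> S) \<longrightarrow>
        (\<exists>N a. N \<subseteq> M \<and> nonthin N \<and> a \<in> S \<and> stat_conv X N x a))"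
    (is "_ \<longleftrightarrow> (\<forall>M x. ?seq M x \<longrightarrow> ?lim M x)")
proof -
  have "?lim M x \<longleftrightarrow> (\<exists>N a. N \<subseteq> M \<and> infinite N \<and> nonthin N \<and> a \<in> topspace (subtopology X S)
          \<and> stat_conv (subtopology X S) N x a)" (is "_ \<longleftrightarrow> ?lim'")
    if seq: "?seq M x" for M x
  proof
    assume "?lim M x"
    then obtain N a where "N \<subseteq> M" "nonthin N" "a \<in> S" "stat_conv X N x a"
      by blast
    moreover from this have "stat_conv (subtopology X S) N x a"
      using seq by (auto simp: stat_conv_subtopology_iff)
    moreover have "a \<in> topspace X"
      using \<open>stat_conv X N x a\<close> by (simp add: stat_conv_def)
    ultimately show ?lim'
      by (auto dest: nonthin_infinite)
  next
    assume ?lim'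
    then show "?lim M x"
      by (auto simp: stat_conv_subtopology_iff)
  qed
  moreover have "is_seq (subtopology X S) M x \<and> nonthin M \<longleftrightarrow> ?seq M x" for M x
    by (auto simp: is_seq_def dest: nonthin_infinite)
  ultimately show ?thesis
    unfolding stat_compact_def by simp
qed

lemma stat_compact_subtopologyE:
  assumes "stat_compact (subtopology X S)" "nonthin M" "\<forall>n\<in>M. x n \<in> topspace X \<inter> S"
  obtains N a where "N \<subseteq> M" "nonthin N" "a \<in> S" "stat_conv X N x a"
  using assms unfolding stat_compact_subtopology_iff by blast

definition closed_stat_compact :: "'a topology \<Rightarrow> 'a set \<Rightarrow> bool" where
  "closed_stat_compact X C \<longleftrightarrow> closedin X C \<and> stat_compact (subtopology X C)"

lemma closed_stat_compact_empty: "closed_stat_compact X {}"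
  unfolding closed_stat_compact_def stat_compact_subtopology_iff
  by (auto dest!: nonthin_infinite)

lemma stat_compact_subtopology_nonthin_part:
  assumes "stat_compact (subtopology X C)" "C \<subseteq> D" "\<forall>n\<in>M. x n \<in> topspace X"
    and "nonthin {n\<in>M. x n \<in> C}"
  shows "\<exists>N a. N \<subseteq> M \<and> nonthin N \<and> a \<in> D \<and> stat_conv X N x a"
proof -
  obtain N a where "N \<subseteq> {n\<in>M. x n \<in> C}" "nonthin N" "a \<in> C" "stat_conv X N x a"
    using assms(1,4) by (rule stat_compact_subtopologyE) (use assms(3) in auto)
  then show ?thesis
    using assms(2) by blast
qed

lemma closed_stat_compact_Un:
  assumes C1: "closed_stat_compact X C1" and C2: "closed_stat_compact X C2"
  shows "closed_stat_compact X (C1 \<union> C2)"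
proof -
  have "stat_compact (subtopology X (C1 \<union> C2))"
    unfolding stat_compact_subtopology_iff
  proof (intro allI impI)
    fix M x
    assume seq: "nonthin M \<and> (\<forall>n\<in>M. x n \<in> topspace X \<inter> (C1 \<union> C2))"
    then have "M = {n\<in>M. x n \<in> C1} \<union> {n\<in>M. x n \<in> C2}"
      by auto
    then have "nonthin {n\<in>M. x n \<in> C1} \<or> nonthin {n\<in>M. x n \<in> C2}"
      using seq not_nonthin_Un by metis
    then show "\<exists>N a. N \<subseteq> M \<and> nonthin N \<and> a \<in> C1 \<union> C2 \<and> stat_conv X N x a"
      using seq C1 C2 stat_compact_subtopology_nonthin_part[of X _ "C1 \<union> C2" M x]
      by (auto simp: closed_stat_compact_def)
  qed
  then show ?thesis
    using C1 C2 by (auto simp: closed_stat_compact_def)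
qed

lemma closed_stat_compact_closedin_subset:
  assumes C: "closed_stat_compact X C" and D: "closedin X D" "D \<subseteq> C"
  shows "closed_stat_compact X D"
proof -
  have "stat_compact (subtopology X D)"
    unfolding stat_compact_subtopology_iff
  proof (intro allI impI)
    fix M x
    assume seq: "nonthin M \<and> (\<forall>n\<in>M. x n \<in> topspace X \<inter> D)"
    moreover have "stat_compact (subtopology X C)"
      using C by (simp add: closed_stat_compact_def)
    ultimately obtain N a where N: "N \<subseteq> M" "nonthin N" "stat_conv X N x a"
      using D(2) by (metis stat_compact_subtopologyE Int_mono order_refl subset_iff)
    moreover have "a \<in> D"
      using stat_conv_closedin[OF D(1) N(3)] N(1) seq by blast
    ultimately show "\<exists>N a. N \<subseteq> M \<and> nonthin N \<and> a \<in> D \<and> stat_conv X N x a"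
      by blast
  qed
  then show ?thesis
    using D(1) by (simp add: closed_stat_compact_def)
qed

lemma stat_opens_eq:
  "stat_opens X = {U. U \<subseteq> stat_carrier X \<and> openin X (Some -` U) \<and>
     (None \<in> U \<longrightarrow> closed_stat_compact X (topspace X - Some -` U))}"
proof (intro set_eqI iffI)
  fix U
  assume "U \<in> stat_opens X"
  then consider V where "openin X V" "U = Some ` V"
    | C where "closed_stat_compact X C" "U = stat_carrier X - Some ` C"
    unfolding stat_opens_def closed_stat_compact_def by blast
  then show "U \<in> {U. U \<subseteq> stat_carrier X \<and> openin X (Some -` U) \<and>
     (None \<in> U \<longrightarrow> closed_stat_compact X (topspace X - Some -` U))}"
  proof cases
    case 1
    then show ?thesis
      using openin_subset[of X V] by (auto simp: stat_carrier_def inj_vimage_image_eq)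
  next
    case 2
    then have "closedin X C"
      by (simp add: closed_stat_compact_def)
    moreover have "Some -` U = topspace X - C"
      using 2 by (auto simp: stat_carrier_def)
    ultimately show ?thesis
      using 2 closedin_subset[of X C] by (auto simp: stat_carrier_def Diff_Diff_Int Int_absorb1)
  qed
next
  fix U
  assume U: "U \<in> {U. U \<subseteq> stat_carrier X \<and> openin X (Some -` U) \<and>
     (None \<in> U \<longrightarrow> closed_stat_compact X (topspace X - Some -` U))}"
  show "U \<in> stat_opens X"
  proof (cases "None \<in> U")
    case True
    then have "U = stat_carrier X - Some ` (topspace X - Some -` U)"
      using U by (auto simp: stat_carrier_def)
    then show ?thesis
      using True U by (auto simp: stat_opens_def closed_stat_compact_def)
  next
    case False
    then have "U = Some ` (Some -` U)"
      using U by (auto simp: stat_carrier_def)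
    then show ?thesis
      using U by (auto simp: stat_opens_def)
  qed
qed

lemma stat_opens_Int:
  assumes "U \<in> stat_opens X" "W \<in> stat_opens X"
  shows "U \<inter> W \<in> stat_opens X"
proof -
  have "topspace X - Some -` (U \<inter> W) = (topspace X - Some -` U) \<union> (topspace X - Some -` W)"
    by auto
  then show ?thesis
    using assms by (auto simp: stat_opens_eq vimage_Int intro: closed_stat_compact_Un)
qed

lemma stat_opens_Union:
  assumes K: "K \<subseteq> stat_opens X"
  shows "\<Union>K \<in> stat_opens X"
proof -
  have open_vimage: "openin X (Some -` \<Union>K)"
    using K by (auto simp: stat_opens_eq vimage_Union)
  have "closed_stat_compact X (topspace X - Some -` \<Union>K)" if None: "None \<in> \<Union>K"
  proof -
    obtain U where U: "U \<in> K" "None \<in> U"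
      using None by blast
    then have "closed_stat_compact X (topspace X - Some -` U)"
      using K by (auto simp: stat_opens_eq)
    moreover have "topspace X - Some -` \<Union>K \<subseteq> topspace X - Some -` U"
      using U(1) by blast
    ultimately show ?thesis
      using open_vimage by (blast intro: closed_stat_compact_closedin_subset)
  qed
  then show ?thesis
    using K open_vimage by (auto simp: stat_opens_eq)
qed

lemma istopology_stat_opens: "istopology (\<lambda>U. U \<in> stat_opens X)"
  unfolding istopology_def by (auto intro: stat_opens_Int stat_opens_Union)

lemma Union_stat_opens: "\<Union>(stat_opens X) = stat_carrier X"
proof -
  have "Some -` stat_carrier X = topspace X"
    by (auto simp: stat_carrier_def)
  then have "stat_carrier X \<in> stat_opens X"
    by (simp add: stat_opens_eq closed_stat_compact_empty)
  then show ?thesis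
    by (auto simp: stat_opens_eq)
qed

definition stat_topology :: "'a topology \<Rightarrow> 'a option topology" where
  "stat_topology X = topology (\<lambda>U. U \<in> stat_opens X)"

lemma openin_stat_topology: "openin (stat_topology X) U \<longleftrightarrow> U \<in> stat_opens X"
  by (simp add: stat_topology_def istopology_stat_opens)

lemma topspace_stat_topology: "topspace (stat_topology X) = stat_carrier X"
  by (simp add: topspace_def openin_stat_topology Union_stat_opens)

lemma continuous_map_Some_stat_topology: "continuous_map X (stat_topology X) Some"
proof -
  have "{p \<in> topspace X. Some p \<in> U} = Some -` U" if "U \<in> stat_opens X" for U
    using that by (auto simp: stat_opens_eq dest: openin_subset)
  then show ?thesis
    unfolding continuous_map_def topspace_stat_topology openin_stat_topology
    by (auto simp: stat_carrier_def stat_opens_eq)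
qed

lemma stat_conv_topspace: "stat_conv X N x a \<Longrightarrow> a \<in> topspace X"
  by (simp add: stat_conv_def)

lemma stat_conv_stat_topology_None:
  assumes M: "nonthin M" "\<forall>n\<in>M. x n \<in> stat_carrier X"
    and thin: "\<And>C. closed_stat_compact X C \<Longrightarrow> \<not> nonthin {n\<in>M. x n \<in> Some ` C}"
  shows "stat_conv (stat_topology X) M x None"
  unfolding stat_conv_def
proof (intro conjI allI impI)
  show "is_seq (stat_topology X) M x" "None \<in> topspace (stat_topology X)"
    using M by (auto simp: is_seq_def topspace_stat_topology stat_carrier_def dest: nonthin_infinite)
  fix U
  assume "openin (stat_topology X) U \<and> None \<in> U"
  then have "closed_stat_compact X (topspace X - Some -` U)"
    by (auto simp: openin_stat_topology stat_opens_eq)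
  note part_thin = thin[OF this]
  have "{n\<in>M. x n \<notin> U} \<subseteq> {n\<in>M. x n \<in> Some ` (topspace X - Some -` U)}"
    using M(2) \<open>openin (stat_topology X) U \<and> None \<in> U\<close> by (auto simp: stat_carrier_def)
  then show "has_density {n\<in>M. x n \<notin> U} 0"
    unfolding has_density_0_iff_not_nonthin using part_thin by (rule not_nonthin_subset)
qed (use M in simp)

lemma stat_compact_stat_topology: "stat_compact (stat_topology X)"
  unfolding stat_compact_def
proof (intro allI impI)
  fix M x
  assume seq: "is_seq (stat_topology X) M x \<and> nonthin M"
  then have car: "\<forall>n\<in>M. x n \<in> stat_carrier X"
    by (simp add: is_seq_def topspace_stat_topology)
  show "\<exists>N a. N \<subseteq> M \<and> infinite N \<and> nonthin N \<and> a \<in> topspace (stat_topology X) \<and>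
          stat_conv (stat_topology X) N x a"
  proof (cases "\<exists>C. closed_stat_compact X C \<and> nonthin {n\<in>M. x n \<in> Some ` C}")
    case True
    then obtain C where C: "closedin X C" "stat_compact (subtopology X C)"
      and part: "nonthin {n\<in>M. x n \<in> Some ` C}"
      by (auto simp: closed_stat_compact_def)
    define y where "y n = the (x n)" for n
    have "\<forall>n\<in>{n\<in>M. x n \<in> Some ` C}. y n \<in> topspace X \<inter> C"
      using closedin_subset[OF C(1)] by (auto simp: y_def)
    with C(2) part obtain N a where N: "N \<subseteq> {n\<in>M. x n \<in> Some ` C}" "nonthin N" "stat_conv X N y a"
      by (rule stat_compact_subtopologyE)
    have "\<forall>n\<in>N. x n = Some (y n)"
      using N(1) by (auto simp: y_def)
    then have "stat_conv (stat_topology X) N x (Some a)"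
      by (rule stat_conv_continuous_map[OF continuous_map_Some_stat_topology N(3)])
    moreover have "N \<subseteq> M" "infinite N"
      using N(1,2) nonthin_infinite by auto
    ultimately show ?thesis
      using N(2) by (intro exI[of _ N] exI[of _ "Some a"]) (simp add: stat_conv_topspace)
  next
    case False
    then have "stat_conv (stat_topology X) M x None"
      using seq car by (intro stat_conv_stat_topology_None) auto
    then show ?thesis
      using seq nonthin_infinite by (intro exI[of _ M] exI[of _ None]) (simp add: stat_conv_topspace)
  qed
qed

theorem mainTheorem17:
  fixes X :: "'a topology"
  assumes "\<not> stat_compact X"
  shows "istopology (\<lambda>U. U \<in> stat_opens X)
       \<and> \<Union>(stat_opens X) = stat_carrier X
       \<and> stat_compact (topology (\<lambda>U. U \<in> stat_opens X))"
  using istopology_stat_opens Union_stat_opens stat_compact_stat_topology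
  unfolding stat_topology_def by blast

end
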